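(* Let $G$ be a profinite-$C$ group and let $A$ be an abelian closed normal subgroup of $G$. Then: (i) For every closed subgroup $B$ of $A$, we have $A=B\times L$ for some closed normal subgroup $L$ of $G$. (ii) If $A$ is a minimal closed normal subgroup of $G$, then $A$ has prime order. (iii) If $A\ne 1$ and $B$ is maximal among the proper open subgroups of $A$ that are normal in $G$, then $A/B$ is isomorphic as a $G$-module (with $G$ acting by conjugation) to a minimal closed normal subgroup of $G$ contained in $A$. In particular, $A$ contains minimal closed normal subgroups of $G$.
   Context: A permutable complement of a subgroup $H$ of a group $G$ is a subgroup $K$ with $G=HK$ and $H\cap K=1$. A profinite group $G$ is a profinite-$C$ group if every closed subgroup of $G$ has a closed permutable complement in $G$. A minimal closed normal subgroup of $G$ is a nontrivial closed normal subgroup of $G$ containing no nontrivial closed normal subgroup of $G$ other than itself. *)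

theory Defs
  imports "HOL-Analysis.Analysis" "HOL-Algebra.Coset"
begin

definition topological_group :: "('a, 'b) monoid_scheme \<Rightarrow> 'a topology \<Rightarrow> bool" where
  "topological_group G T \<longleftrightarrow> group G \<and> topspace T = carrier G \<and>
     continuous_map (prod_topology T T) T (\<lambda>p. fst p \<otimes>\<^bsub>G\<^esub> snd p) \<and>
     continuous_map T T (\<lambda>x. inv\<^bsub>G\<^esub> x)"

definition profinite_group :: "('a, 'b) monoid_scheme \<Rightarrow> 'a topology \<Rightarrow> bool" where
  "profinite_group G T \<longleftrightarrow> topological_group G T \<and> compact_space T \<and> Hausdorff_space T \<and>
     (\<forall>x \<in> topspace T. \<forall>y. connected_component_of T x y \<longrightarrow> x = y)"

definition closed_subgroup :: "('a, 'b) monoid_scheme \<Rightarrow> 'a topology \<Rightarrow> 'a set \<Rightarrow> bool" where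
  "closed_subgroup G T H \<longleftrightarrow> subgroup H G \<and> closedin T H"

definition permutable_complement :: "('a, 'b) monoid_scheme \<Rightarrow> 'a set \<Rightarrow> 'a set \<Rightarrow> bool" where
  "permutable_complement G H K \<longleftrightarrow> subgroup K G \<and> H <#>\<^bsub>G\<^esub> K = carrier G \<and> H \<inter> K = {\<one>\<^bsub>G\<^esub>}"

definition profinite_C_group :: "('a, 'b) monoid_scheme \<Rightarrow> 'a topology \<Rightarrow> bool" where
  "profinite_C_group G T \<longleftrightarrow> profinite_group G T \<and>
     (\<forall>H. closed_subgroup G T H \<longrightarrow> (\<exists>K. closed_subgroup G T K \<and> permutable_complement G H K))"

definition minimal_closed_normal :: "('a, 'b) monoid_scheme \<Rightarrow> 'a topology \<Rightarrow> 'a set \<Rightarrow> bool" where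
  "minimal_closed_normal G T N \<longleftrightarrow> N \<lhd> G \<and> closedin T N \<and> N \<noteq> {\<one>\<^bsub>G\<^esub>} \<and>
     (\<forall>M. M \<lhd> G \<and> closedin T M \<and> M \<subseteq> N \<and> M \<noteq> {\<one>\<^bsub>G\<^esub>} \<longrightarrow> M = N)"

end

theory Submission
  imports Defs "HOL-Algebra.Multiplicative_Group" "HOL-Algebra.SndIsomorphismGrp"
begin

text \<open>
  If K is a closed complement of the closed subgroup B \<subseteq> A in G, then by Dedekind's modular law
  L = A \<inter> K is a complement of B in A; it is normal because G = BK, conjugation by K preserves
  A \<inter> K and B \<subseteq> A centralises the abelian group A.

  Every x \<noteq> 1 of a profinite group lies outside some open normal subgroup H. If A is minimal,
  then H \<inter> A = 1, so the compact group A is discrete, hence finite; then all its subgroups are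
  closed, and the normal complement of any of them is 1 or A, so A has no proper nontrivial subgroup
  and its order is prime. In general the complement of H \<inter> A in A is finite and nontrivial, and a
  nontrivial normal subgroup of least order inside it is a minimal closed normal subgroup.

  For a maximal open G-normal B < A the complement L is G-isomorphic to A/B via l \<mapsto> Bl, and it is
  minimal: for 1 \<noteq> M \<subseteq> L normal, BM is open in A and contains B, so either BM = B, forcing
  M \<subseteq> B \<inter> L = 1, or BM = A, forcing M = L \<inter> BM = L by the modular law.
\<close>

section \<open>Products, cores and complements of subgroups\<close>

lemma (in group) inv_mult_cancel_left [simp]:
  "x \<in> carrier G \<Longrightarrow> y \<in> carrier G \<Longrightarrow> inv x \<otimes> (x \<otimes> y) = y"
  by (simp add: m_assoc[symmetric])

lemma (in group) mult_inv_cancel_left [simp]: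
  "x \<in> carrier G \<Longrightarrow> y \<in> carrier G \<Longrightarrow> x \<otimes> (inv x \<otimes> y) = y"
  by (simp add: m_assoc[symmetric])

lemma (in group) set_mult_one_right:
  "X \<subseteq> carrier G \<Longrightarrow> X <#> {\<one>} = X"
  by (simp add: r_coset_eq_set_mult[symmetric])

lemma (in group) set_mult_one_left:
  "X \<subseteq> carrier G \<Longrightarrow> {\<one>} <#> X = X"
  by (simp add: l_coset_eq_set_mult[symmetric] lcos_mult_one)

lemma (in group) subset_set_mult_left:
  "subgroup H G \<Longrightarrow> X \<subseteq> carrier G \<Longrightarrow> X \<subseteq> H <#> X"
  using mono_set_mult[of "{\<one>}" H X X G] subgroup.one_closed set_mult_one_left by auto

lemma (in group) subset_set_mult_right:
  "subgroup H G \<Longrightarrow> X \<subseteq> carrier G \<Longrightarrow> X \<subseteq> X <#> H"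
  using mono_set_mult[of X X "{\<one>}" H G] subgroup.one_closed set_mult_one_right by auto

lemma (in group) Int_set_mult_modular:
  assumes "subgroup Z G" "X \<subseteq> Z" "Y \<subseteq> carrier G"
  shows "Z \<inter> (X <#> Y) = X <#> (Z \<inter> Y)"
proof (intro equalityI subsetI)
  fix z assume "z \<in> Z \<inter> (X <#> Y)"
  then obtain x y where z: "z \<in> Z" and xy: "x \<in> X" "y \<in> Y" "z = x \<otimes> y"
    unfolding set_mult_def by blast
  have "x \<in> Z" using xy(1) assms(2) by blast
  then have "inv x \<otimes> z \<in> Z" using z assms(1) by (simp add: subgroup.m_closed subgroup.m_inv_closed)
  moreover have "inv x \<otimes> z = y"
    using xy assms subgroup.mem_carrier[OF assms(1) \<open>x \<in> Z\<close>] by auto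
  ultimately show "z \<in> X <#> (Z \<inter> Y)" using xy unfolding set_mult_def by blast
next
  fix z assume "z \<in> X <#> (Z \<inter> Y)"
  then obtain x y where xy: "x \<in> X" "y \<in> Z \<inter> Y" "z = x \<otimes> y"
    unfolding set_mult_def by blast
  then have "z \<in> Z" using assms(1,2) by (auto intro: subgroup.m_closed)
  then show "z \<in> Z \<inter> (X <#> Y)" using xy unfolding set_mult_def by blast
qed

lemma (in group) normal_set_mult:
  assumes B: "B \<lhd> G" and M: "M \<lhd> G"
  shows "B <#> M \<lhd> G"
proof -
  interpret second_isomorphism_grp B G M
    using B M by (simp add: second_isomorphism_grp_def second_isomorphism_grp_axioms_def normal_imp_subgroup)
  have "g \<otimes> y \<otimes> inv g \<in> B <#> M" if g: "g \<in> carrier G" and y: "y \<in> B <#> M" for g y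
  proof -
    obtain b m where bm: "b \<in> B" "m \<in> M" "y = b \<otimes> m"
      using y unfolding set_mult_def by blast
    have "b \<in> carrier G" "m \<in> carrier G"
      using bm B M by (auto dest: normal_imp_subgroup subgroup.mem_carrier)
    then have "g \<otimes> y \<otimes> inv g = (g \<otimes> b \<otimes> inv g) \<otimes> (g \<otimes> m \<otimes> inv g)"
      using g bm(3) by (simp add: m_assoc)
    moreover have "g \<otimes> b \<otimes> inv g \<in> B" "g \<otimes> m \<otimes> inv g \<in> M"
      using B M g bm normal_inv_iff by blast+
    ultimately show ?thesis unfolding set_mult_def by blast
  qed
  then show ?thesis using normal_set_mult_subgroup by (simp add: normal_inv_iff)
qed

definition normal_core :: "('a, 'b) monoid_scheme \<Rightarrow> 'a set \<Rightarrow> 'a set" where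
  "normal_core G S = {h \<in> carrier G. \<forall>g \<in> carrier G. g \<otimes>\<^bsub>G\<^esub> h \<otimes>\<^bsub>G\<^esub> inv\<^bsub>G\<^esub> g \<in> S}"

lemma (in group) normal_core_subset: "normal_core G S \<subseteq> S"
proof
  fix h assume "h \<in> normal_core G S"
  then have "h \<in> carrier G" "\<one> \<otimes> h \<otimes> inv \<one> \<in> S"
    unfolding normal_core_def by blast+
  then show "h \<in> S" by simp
qed

lemma (in group) normal_core_normal:
  assumes S: "subgroup S G"
  shows "normal_core G S \<lhd> G"
  unfolding normal_inv_iff
proof
  show "subgroup (normal_core G S) G"
  proof (rule subgroupI)
    show "normal_core G S \<noteq> {}"
      using subgroup.one_closed[OF S] by (auto simp: normal_core_def)
  next
    fix h assume h: "h \<in> normal_core G S"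
    have "g \<otimes> inv h \<otimes> inv g = inv (g \<otimes> h \<otimes> inv g)" if "g \<in> carrier G" for g
      using that h by (simp add: normal_core_def inv_mult_group m_assoc)
    then show "inv h \<in> normal_core G S"
      using h S by (auto simp: normal_core_def subgroup.m_inv_closed)
  next
    fix h k assume h: "h \<in> normal_core G S" and k: "k \<in> normal_core G S"
    have "g \<otimes> (h \<otimes> k) \<otimes> inv g = (g \<otimes> h \<otimes> inv g) \<otimes> (g \<otimes> k \<otimes> inv g)" if "g \<in> carrier G" for g
      using that h k by (simp add: normal_core_def m_assoc)
    then show "h \<otimes> k \<in> normal_core G S"
      using h k S by (auto simp: normal_core_def subgroup.m_closed)
  qed (auto simp: normal_core_def)
next
  show "\<forall>x\<in>carrier G. \<forall>h\<in>normal_core G S. x \<otimes> h \<otimes> inv x \<in> normal_core G S"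
  proof (intro ballI)
    fix x h assume x: "x \<in> carrier G" and h: "h \<in> normal_core G S"
    have "g \<otimes> (x \<otimes> h \<otimes> inv x) \<otimes> inv g = (g \<otimes> x) \<otimes> h \<otimes> inv (g \<otimes> x)" if "g \<in> carrier G" for g
      using that x h by (simp add: normal_core_def inv_mult_group m_assoc)
    then show "x \<otimes> h \<otimes> inv x \<in> normal_core G S"
      using x h by (auto simp: normal_core_def)
  qed
qed

lemma (in group) stabilizer_r_coset_subgroup:
  assumes "U \<subseteq> carrier G"
  shows "subgroup {c \<in> carrier G. U #> c = U} G"
proof (rule subgroupI)
  fix c assume "c \<in> {c \<in> carrier G. U #> c = U}"
  then have "U #> inv c = (U #> c) #> inv c" "c \<in> carrier G" by auto
  then show "inv c \<in> {c \<in> carrier G. U #> c = U}"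
    using assms by (simp add: coset_mult_assoc)
qed (use assms in \<open>auto simp: coset_mult_assoc[symmetric]\<close>)

lemma (in group) r_coset_eq_if_stable:
  assumes "U \<subseteq> carrier G" "c \<in> carrier G" "U #> c \<subseteq> U" "U #> inv c \<subseteq> U"
  shows "U #> c = U"
proof -
  have "U = (U #> inv c) #> c" using assms(1,2) by (simp add: coset_mult_assoc)
  also have "\<dots> \<subseteq> U #> c" using assms(4) unfolding r_coset_def by blast
  finally show ?thesis using assms(3) by blast
qed

lemma (in group) prime_order_if_no_proper_subgroups:
  assumes fin: "finite (carrier G)" and nontrivial: "carrier G \<noteq> {\<one>}"
    and no_proper: "\<And>S. subgroup S G \<Longrightarrow> S = {\<one>} \<or> S = carrier G"
  shows "prime (order G)"
proof -
  obtain x where x: "x \<in> carrier G" "x \<noteq> \<one>" using nontrivial one_closed by blast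
  have cyclic_subgroup_card: "card (generate G {y}) = ord y" if "y \<in> carrier G" for y
    using generate_pow_card[OF that] by simp
  have cyclic_subgroup: "subgroup (generate G {y}) G" if "y \<in> carrier G" for y
    using that by (intro generate_is_subgroup) auto
  have "generate G {x} = carrier G"
    using no_proper[OF cyclic_subgroup[OF x(1)]] generate.incl[of x "{x}" G] x by auto
  then have ord_x: "ord x = order G" using cyclic_subgroup_card[OF x(1)] by (simp add: order_def)
  have "1 < order G"
  proof -
    have "card {\<one>, x} \<le> order G" unfolding order_def using fin x by (intro card_mono) auto
    then show ?thesis using x by simp
  qed
  show ?thesis
  proof (rule ccontr)
    assume "\<not> prime (order G)"
    then obtain d where d: "d dvd order G" "d \<noteq> 1" "d \<noteq> order G"
      using \<open>1 < order G\<close> unfolding prime_nat_iff by blast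
    then have "d \<noteq> 0" using \<open>1 < order G\<close> by auto
    then have "1 < d" "d < order G"
      using d dvd_imp_le[OF d(1)] \<open>1 < order G\<close> by auto
    have "ord (x [^] d) = order G div d"
      using ord_pow_gen[OF x(1), of d] d(1) \<open>d \<noteq> 0\<close> ord_x by (simp add: gcd_nat.absorb2)
    moreover have "order G div d \<noteq> 1" "order G div d \<noteq> order G"
      using d(1,3) \<open>1 < d\<close> \<open>1 < order G\<close> by (auto elim!: dvdE)
    moreover have xd: "x [^] d \<in> carrier G" using x(1) by simp
    ultimately show False
      using no_proper[OF cyclic_subgroup[OF xd]] cyclic_subgroup_card[OF xd] by (auto simp: order_def)
  qed
qed

lemma (in group) abelian_normal_Int_complement_normal:
  assumes A: "A \<lhd> G" and comm: "\<forall>x\<in>A. \<forall>y\<in>A. x \<otimes> y = y \<otimes> x"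
    and B: "B \<subseteq> A" and K: "subgroup K G" "B <#> K = carrier G"
  shows "A \<inter> K \<lhd> G"
proof -
  have Ac: "A \<subseteq> carrier G" using A normal_imp_subgroup subgroup.subset by blast
  have "g \<otimes> l \<otimes> inv g \<in> A \<inter> K" if g: "g \<in> carrier G" and l: "l \<in> A \<inter> K" for g l
  proof -
    have "g \<in> B <#> K" using g K(2) by simp
    then obtain b k where bk: "b \<in> B" "k \<in> K" "g = b \<otimes> k"
      unfolding set_mult_def by blast
    have carrier: "b \<in> carrier G" "k \<in> carrier G" "l \<in> carrier G"
      using bk(1) B Ac subgroup.mem_carrier[OF K(1) bk(2)] l by auto
    define m where "m = k \<otimes> l \<otimes> inv k"
    have mA: "m \<in> A" using A carrier(2) l normal_inv_iff unfolding m_def by blast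
    have mK: "m \<in> K"
      using K(1) bk(2) l unfolding m_def by (simp add: subgroup.m_closed subgroup.m_inv_closed)
    have mc: "m \<in> carrier G" using mA Ac by blast
    have "g \<otimes> l \<otimes> inv g = b \<otimes> m \<otimes> inv b"
      using carrier bk(3) by (simp add: m_def m_assoc inv_mult_group)
    also have "\<dots> = m \<otimes> b \<otimes> inv b"
    proof -
      have "b \<otimes> m = m \<otimes> b" using comm bk(1) B mA by blast
      then show ?thesis by simp
    qed
    also have "\<dots> = m" using mc carrier by (simp add: m_assoc)
    finally show ?thesis using mA mK by simp
  qed
  then show ?thesis
    using subgroups_Inter_pair[OF normal_imp_subgroup[OF A] K(1)] by (simp add: normal_inv_iff)
qed

lemma (in normal) r_coset_conjugate:
  assumes "H #> x = H #> y" "x \<in> carrier G" "y \<in> carrier G" "g \<in> carrier G"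
  shows "H #> (g \<otimes> x \<otimes> inv g) = H #> (g \<otimes> y \<otimes> inv g)"
proof -
  have "x \<in> H #> y" using rcos_self[OF assms(2) is_subgroup] assms(1) by simp
  then obtain h where h: "h \<in> H" "x = h \<otimes> y" unfolding r_coset_def by blast
  then have "g \<otimes> x \<otimes> inv g = (g \<otimes> h \<otimes> inv g) \<otimes> (g \<otimes> y \<otimes> inv g)"
    using assms(3,4) mem_carrier by (simp add: m_assoc)
  moreover have "g \<otimes> h \<otimes> inv g \<in> H" using h(1) assms(4) inv_op_closed2 by blast
  ultimately have "g \<otimes> x \<otimes> inv g \<in> H #> (g \<otimes> y \<otimes> inv g)" unfolding r_coset_def by blast
  from repr_independence[OF this _ is_subgroup] show ?thesis using assms(3,4) by simp
qed

lemma carrier_restricted_FactGroup: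
  "carrier (G\<lparr>carrier := A\<rparr> Mod B) = (\<lambda>a. B #>\<^bsub>G\<^esub> a) ` A"
  unfolding FactGroup_def RCOSETS_def by auto

lemma (in group) r_coset_iso_quotient:
  assumes A: "subgroup A G" and B: "B \<lhd> G" and L: "subgroup L G"
    and decomp: "B <#> L = A" "B \<inter> L = {\<one>}"
  shows "(\<lambda>l. B #> l) \<in> iso (G\<lparr>carrier := L\<rparr>) (G\<lparr>carrier := A\<rparr> Mod B)"
proof -
  interpret B: normal B G using B .
  have Lc: "L \<subseteq> carrier G" using L subgroup.subset by blast
  have LA: "L \<subseteq> A" using subset_set_mult_left[OF B.is_subgroup Lc] decomp(1) by simp
  have "(\<lambda>l. B #> l) \<in> hom (G\<lparr>carrier := L\<rparr>) (G\<lparr>carrier := A\<rparr> Mod B)"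
  proof (rule homI)
    fix l assume "l \<in> carrier (G\<lparr>carrier := L\<rparr>)"
    then show "B #> l \<in> carrier (G\<lparr>carrier := A\<rparr> Mod B)"
      using LA by (auto simp: carrier_restricted_FactGroup)
  next
    fix l l' assume "l \<in> carrier (G\<lparr>carrier := L\<rparr>)" "l' \<in> carrier (G\<lparr>carrier := L\<rparr>)"
    then show "B #> (l \<otimes>\<^bsub>G\<lparr>carrier := L\<rparr>\<^esub> l') =
        (B #> l) \<otimes>\<^bsub>G\<lparr>carrier := A\<rparr> Mod B\<^esub> (B #> l')"
      using Lc B.rcos_sum by (simp add: FactGroup_def subsetD)
  qed
  moreover have "inj_on (\<lambda>l. B #> l) L"
  proof (rule inj_onI)
    fix l l' assume l: "l \<in> L" "l' \<in> L" "B #> l = B #> l'"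
    then have "l \<otimes> inv l' \<in> B"
      using Lc B.rcos_module_imp[OF is_group] rcos_self[OF _ B.is_subgroup] by blast
    moreover have "l \<otimes> inv l' \<in> L" using l L by (simp add: subgroup.m_closed subgroup.m_inv_closed)
    ultimately have "l \<otimes> inv l' = \<one>" using decomp(2) by blast
    have "l = (l \<otimes> inv l') \<otimes> l'" using l Lc by (simp add: m_assoc subsetD)
    also have "\<dots> = l'" using \<open>l \<otimes> inv l' = \<one>\<close> l Lc by (simp add: subsetD)
    finally show "l = l'" .
  qed
  moreover have "(\<lambda>a. B #> a) ` A \<subseteq> (\<lambda>l. B #> l) ` L"
  proof
    fix X assume "X \<in> (\<lambda>a. B #> a) ` A"
    then obtain b l where bl: "b \<in> B" "l \<in> L" "X = B #> (b \<otimes> l)"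
      using decomp(1) unfolding set_mult_def by blast
    have "B #> (b \<otimes> l) = (B #> b) #> l"
      using bl Lc B.subset by (simp add: coset_mult_assoc subsetD)
    then have "X = B #> l" using bl(1,3) B.rcos_const[OF is_group] by simp
    then show "X \<in> (\<lambda>l. B #> l) ` L" using bl(2) by blast
  qed
  ultimately show ?thesis
    using LA unfolding iso_def bij_betw_def carrier_restricted_FactGroup by auto
qed

section \<open>Topological and profinite groups\<close>

lemma tube_neighbourhood:
  assumes K: "compactin X K" and f: "continuous_map (prod_topology X Y) Z f"
    and Q: "openin Z Q" and y: "y \<in> topspace Y" and fK: "\<And>k. k \<in> K \<Longrightarrow> f (k, y) \<in> Q"
  shows "\<exists>V. openin Y V \<and> y \<in> V \<and> (\<forall>k\<in>K. \<forall>v\<in>V. f (k, v) \<in> Q)"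
proof -
  let ?W = "{p \<in> topspace (prod_topology X Y). f p \<in> Q}"
  have "openin (prod_topology X Y) ?W"
    using openin_continuous_map_preimage[OF f Q] .
  moreover have "K \<times> {y} \<subseteq> ?W"
    using compactin_subset_topspace[OF K] y fK by auto
  ultimately obtain U V where "openin Y V" "y \<in> V" "K \<subseteq> U" "U \<times> V \<subseteq> ?W"
    using tube_lemma_left[OF _ K y] by metis
  then show ?thesis by blast
qed

lemma clopen_separation:
  assumes "compact_space X" "Hausdorff_space X"
    and totally_disconnected: "\<forall>x\<in>topspace X. \<forall>y. connected_component_of X x y \<longrightarrow> x = y"
    and x: "x \<in> topspace X" and y: "y \<in> topspace X" "x \<noteq> y"
  shows "\<exists>U. closedin X U \<and> openin X U \<and> x \<in> U \<and> y \<notin> U"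
proof -
  have "quasi_component_of X x = connected_component_of X x"
    using assms(1,2) by (simp add: quasi_eq_connected_component_of)
  then have "\<not> quasi_component_of X x y"
    using totally_disconnected x y by metis
  then obtain U where U: "closedin X U" "openin X U" "x \<in> U \<longleftrightarrow> y \<notin> U"
    using x y unfolding quasi_component_of_def by blast
  show ?thesis
  proof (cases "x \<in> U")
    case True
    then show ?thesis using U by blast
  next
    case False
    then show ?thesis
      using U x by (intro exI[of _ "topspace X - U"]) (auto intro: closedin_diff openin_diff)
  qed
qed

lemma continuous_map_group_mult:
  assumes "topological_group G T" "continuous_map X T f" "continuous_map X T g"
  shows "continuous_map X T (\<lambda>x. f x \<otimes>\<^bsub>G\<^esub> g x)"
proof -
  have "continuous_map (prod_topology T T) T (\<lambda>p. fst p \<otimes>\<^bsub>G\<^esub> snd p)"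
    using assms(1) by (simp add: topological_group_def)
  from continuous_map_compose[OF continuous_map_pairedI[OF assms(2,3)] this]
  show ?thesis by (simp add: o_def)
qed

lemma continuous_map_group_inv:
  assumes "topological_group G T" "continuous_map X T f"
  shows "continuous_map X T (\<lambda>x. inv\<^bsub>G\<^esub> f x)"
proof -
  have "continuous_map T T (\<lambda>x. inv\<^bsub>G\<^esub> x)"
    using assms(1) by (simp add: topological_group_def)
  from continuous_map_compose[OF assms(2) this] show ?thesis by (simp add: o_def)
qed

lemma subtopology_carrier:
  "topological_group G T \<Longrightarrow> subtopology T (carrier G) = T"
  by (metis subtopology_topspace topological_group_def)

lemma (in group) openin_subtopology_r_coset:
  assumes tg: "topological_group G T" and A: "subgroup A G" and a: "a \<in> A"
    and X: "openin (subtopology T A) X"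
  shows "openin (subtopology T A) (X #> a)"
proof -
  have Ac: "A \<subseteq> carrier G" and ac: "a \<in> carrier G"
    using A a subgroup.subset by blast+
  have top: "topspace (subtopology T A) = A"
    using tg Ac by (auto simp: topological_group_def)
  have XA: "X \<subseteq> A" using openin_subset[OF X] top by simp
  have "continuous_map T T (\<lambda>y. y \<otimes> inv a)"
    using tg ac by (intro continuous_map_group_mult continuous_map_id[unfolded id_def])
      (auto simp: topological_group_def)
  moreover have "(\<lambda>y. y \<otimes> inv a) \<in> A \<rightarrow> A"
    using A a by (auto intro: subgroup.m_closed subgroup.m_inv_closed)
  ultimately have "continuous_map (subtopology T A) (subtopology T A) (\<lambda>y. y \<otimes> inv a)"
    by (metis continuous_map_in_subtopology continuous_map_from_subtopology top)
  moreover have "X #> a = {y \<in> A. y \<otimes> inv a \<in> X}"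
  proof (intro equalityI subsetI)
    fix y assume "y \<in> X #> a"
    then obtain x where "x \<in> X" "y = x \<otimes> a" unfolding r_coset_def by blast
    then show "y \<in> {y \<in> A. y \<otimes> inv a \<in> X}"
      using XA A a Ac ac by (auto simp: m_assoc intro: subgroup.m_closed)
  next
    fix y assume y: "y \<in> {y \<in> A. y \<otimes> inv a \<in> X}"
    then have "y = (y \<otimes> inv a) \<otimes> a" using Ac ac by (auto simp: m_assoc)
    then show "y \<in> X #> a" using y unfolding r_coset_def by blast
  qed
  ultimately show ?thesis
    using openin_continuous_map_preimage[OF _ X] top by metis
qed

lemma (in group) closedin_subtopology_open_subgroup:
  assumes tg: "topological_group G T" and A: "subgroup A G" and B: "subgroup B G" "B \<subseteq> A"
    and B_open: "openin (subtopology T A) B"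
  shows "closedin (subtopology T A) B"
proof -
  have Ac: "A \<subseteq> carrier G" using A subgroup.subset by blast
  have "A - B = (\<Union>a\<in>A - B. B #> a)"
  proof (intro equalityI subsetI)
    fix a assume "a \<in> A - B"
    then show "a \<in> (\<Union>a\<in>A - B. B #> a)" using rcos_self[OF _ B(1)] Ac by blast
  next
    fix y assume "y \<in> (\<Union>a\<in>A - B. B #> a)"
    then obtain a b where a: "a \<in> A" "a \<notin> B" and b: "b \<in> B" "y = b \<otimes> a"
      unfolding r_coset_def by blast
    have "y \<in> A" using a b B A by (auto intro: subgroup.m_closed)
    moreover have "y \<notin> B"
    proof
      assume "y \<in> B"
      then have "inv b \<otimes> y \<in> B" using b B(1) by (auto intro: subgroup.m_closed subgroup.m_inv_closed)
      moreover have "inv b \<otimes> y = a" using a b Ac B(1) subgroup.mem_carrier by fastforce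
      ultimately show False using a by simp
    qed
    ultimately show "y \<in> A - B" by blast
  qed
  moreover have "openin (subtopology T A) (\<Union>a\<in>A - B. B #> a)"
    using openin_subtopology_r_coset[OF tg A _ B_open] by blast
  moreover have "topspace (subtopology T A) = A"
    using tg Ac by (auto simp: topological_group_def)
  ultimately show ?thesis using B(2) by (simp add: closedin_def)
qed

lemma (in group) closedin_open_subgroup:
  assumes "topological_group G T" "subgroup H G" "openin T H"
  shows "closedin T H"
  using closedin_subtopology_open_subgroup[OF assms(1) subgroup_self assms(2)
      subgroup.subset[OF assms(2)]] assms(3)
  by (simp add: subtopology_carrier[OF assms(1)])

lemma (in group) openin_subgroupI:
  assumes tg: "topological_group G T" and A: "subgroup A G" and C: "subgroup C G" "C \<subseteq> A"
    and W: "openin (subtopology T A) W" "\<one> \<in> W" "W \<subseteq> C"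
  shows "openin (subtopology T A) C"
proof -
  have "C = (\<Union>c\<in>C. W #> c)"
  proof (intro equalityI subsetI)
    fix c assume c: "c \<in> C"
    then have "c = \<one> \<otimes> c" using subgroup.mem_carrier[OF C(1)] by simp
    then have "c \<in> W #> c" using W(2) unfolding r_coset_def by blast
    then show "c \<in> (\<Union>c\<in>C. W #> c)" using c by blast
  next
    fix y assume "y \<in> (\<Union>c\<in>C. W #> c)"
    then show "y \<in> C" using W(3) C(1) unfolding r_coset_def by (auto intro: subgroup.m_closed)
  qed
  moreover have "openin (subtopology T A) (\<Union>c\<in>C. W #> c)"
    using openin_subtopology_r_coset[OF tg A _ W(1)] C(2) by blast
  ultimately show ?thesis by simp
qed

lemma (in group) openin_r_coset:
  assumes "topological_group G T" "g \<in> carrier G" "openin T Q"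
  shows "openin T (Q #> g)"
  using openin_subtopology_r_coset[OF _ subgroup_self] assms by (simp add: subtopology_carrier)

lemma (in group) finite_if_Int_open_trivial:
  assumes tg: "topological_group G T" and "compact_space T"
    and S: "subgroup S G" "closedin T S" and Q: "openin T Q" "S \<inter> Q = {\<one>}"
  shows "finite S"
proof -
  have Sc: "S \<subseteq> carrier G" using S subgroup.subset by blast
  have Qc: "Q \<subseteq> carrier G" using openin_subset[OF Q(1)] tg by (simp add: topological_group_def)
  have "S \<subseteq> \<Union>((\<lambda>s. Q #> s) ` S)"
  proof
    fix s assume s: "s \<in> S"
    then have "s = \<one> \<otimes> s" using Sc by auto
    then show "s \<in> \<Union>((\<lambda>s. Q #> s) ` S)" using s Q(2) unfolding r_coset_def by blast
  qed
  moreover have "openin T V" if "V \<in> (\<lambda>s. Q #> s) ` S" for V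
    using that openin_r_coset[OF tg _ Q(1)] Sc by auto
  ultimately obtain F where F: "finite F" "F \<subseteq> (\<lambda>s. Q #> s) ` S" "S \<subseteq> \<Union>F"
    using compactinD[OF closedin_compact_space[OF assms(2) S(2)]] by metis
  then obtain S' where S': "S' \<subseteq> S" "finite S'" "F = (\<lambda>s. Q #> s) ` S'"
    using finite_subset_image[OF F(1,2)] by blast
  have "S \<subseteq> S'"
  proof
    fix y assume y: "y \<in> S"
    then have "y \<in> \<Union>((\<lambda>s. Q #> s) ` S')" using F(3) unfolding S'(3) by blast
    then obtain s q where sq: "s \<in> S'" "q \<in> Q" "y = q \<otimes> s"
      unfolding r_coset_def by blast
    have s: "s \<in> S" "s \<in> carrier G" using sq(1) S'(1) Sc by auto
    have "q = y \<otimes> inv s" using sq(2,3) s(2) Qc by (auto simp: m_assoc)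
    then have "q \<in> S" using y s(1) S(1) by (simp add: subgroup.m_closed subgroup.m_inv_closed)
    then have "q = \<one>" using sq(2) Q(2) by blast
    then show "y \<in> S'" using sq s by simp
  qed
  then show ?thesis using S'(2) finite_subset by blast
qed

lemma (in group) right_stable_neighbourhood:
  assumes tg: "topological_group G T" and U: "compactin T U" "openin T U"
  shows "\<exists>V. openin T V \<and> \<one> \<in> V \<and> (\<forall>u\<in>U. \<forall>v\<in>V. u \<otimes> v \<in> U)"
proof -
  have top: "topspace T = carrier G" using tg by (simp add: topological_group_def)
  have "continuous_map (prod_topology T T) T (\<lambda>p. fst p \<otimes> snd p)"
    using continuous_map_group_mult[OF tg continuous_map_fst continuous_map_snd] .
  moreover have "\<one> \<in> topspace T" using top by simp
  moreover have "fst (u, \<one>) \<otimes> snd (u, \<one>) \<in> U" if "u \<in> U" for u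
    using that openin_subset[OF U(2)] top by auto
  ultimately have "\<exists>V. openin T V \<and> \<one> \<in> V \<and> (\<forall>u\<in>U. \<forall>v\<in>V. fst (u, v) \<otimes> snd (u, v) \<in> U)"
    by (rule tube_neighbourhood[OF U(1) _ U(2)])
  then show ?thesis by simp
qed

lemma (in group) conjugation_invariant_neighbourhood:
  assumes tg: "topological_group G T" and "compact_space T" and V: "openin T V" "\<one> \<in> V"
  shows "\<exists>W. openin T W \<and> \<one> \<in> W \<and> (\<forall>g\<in>carrier G. \<forall>w\<in>W. g \<otimes> w \<otimes> inv g \<in> V)"
proof -
  have top: "topspace T = carrier G" using tg by (simp add: topological_group_def)
  have "compactin T (carrier G)" using assms(2) top by (simp add: compact_space_def)
  moreover have "continuous_map (prod_topology T T) T (\<lambda>p. fst p \<otimes> snd p \<otimes> inv (fst p))"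
    using tg by (intro continuous_map_group_mult continuous_map_group_inv continuous_map_fst
      continuous_map_snd)
  moreover have "\<one> \<in> topspace T" using top by simp
  moreover have "fst (g, \<one>) \<otimes> snd (g, \<one>) \<otimes> inv (fst (g, \<one>)) \<in> V" if "g \<in> carrier G" for g
    using that V(2) by simp
  ultimately have "\<exists>W. openin T W \<and> \<one> \<in> W \<and>
      (\<forall>g\<in>carrier G. \<forall>w\<in>W. fst (g, w) \<otimes> snd (g, w) \<otimes> inv (fst (g, w)) \<in> V)"
    by (rule tube_neighbourhood[OF _ _ V(1)])
  then show ?thesis by simp
qed

lemma (in group) open_normal_subgroup_in_clopen:
  assumes tg: "topological_group G T" and cs: "compact_space T"
    and U: "closedin T U" "openin T U" "\<one> \<in> U"
  shows "\<exists>H. H \<lhd> G \<and> openin T H \<and> H \<subseteq> U"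
proof -
  have top: "topspace T = carrier G" using tg by (simp add: topological_group_def)
  have Uc: "U \<subseteq> carrier G" using openin_subset[OF U(2)] top by simp
  obtain V where V: "openin T V" "\<one> \<in> V" "\<And>u v. u \<in> U \<Longrightarrow> v \<in> V \<Longrightarrow> u \<otimes> v \<in> U"
    using right_stable_neighbourhood[OF tg closedin_compact_space[OF cs U(1)] U(2)] by blast
  have Vc: "V \<subseteq> carrier G" using openin_subset[OF V(1)] top by simp
  txt \<open>The normal core of the stabiliser S of U is contained in U and contains a
    conjugation-invariant neighbourhood of 1, hence is open.\<close>
  define S where "S = {c \<in> carrier G. U #> c = U}"
  have into: "U #> v \<subseteq> U" if "v \<in> V" for v
    using V(3) that unfolding r_coset_def by blast
  have stabilizes: "c \<in> S" if "c \<in> V" "inv c \<in> V" for c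
    using r_coset_eq_if_stable[OF Uc _ into into] that Vc unfolding S_def by blast
  have "{v \<in> V. inv v \<in> V} = V \<inter> {x \<in> topspace T. inv x \<in> V}"
    using Vc top by auto
  then have "openin T {v \<in> V. inv v \<in> V}"
    using openin_continuous_map_preimage[OF continuous_map_group_inv[OF tg continuous_map_id] V(1)]
      V(1) by (simp add: openin_Int)
  moreover have "\<one> \<in> {v \<in> V. inv v \<in> V}" using V(2) by simp
  ultimately obtain W where W: "openin T W" "\<one> \<in> W"
    "\<forall>g\<in>carrier G. \<forall>w\<in>W. g \<otimes> w \<otimes> inv g \<in> {v \<in> V. inv v \<in> V}"
    using conjugation_invariant_neighbourhood[OF tg cs] by blast
  have W_core: "W \<subseteq> normal_core G S"
    using W(3) stabilizes openin_subset[OF W(1)] top unfolding normal_core_def by blast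
  have S: "subgroup S G" unfolding S_def using stabilizer_r_coset_subgroup[OF Uc] .
  have "openin T (normal_core G S)"
    using openin_subgroupI[OF tg subgroup_self normal_imp_subgroup[OF normal_core_normal[OF S]]]
      W W_core by (auto simp: subtopology_carrier[OF tg] normal_core_def)
  moreover have "S \<subseteq> U"
  proof
    fix c assume "c \<in> S"
    then have "c \<in> carrier G" "U #> c = U" unfolding S_def by auto
    moreover have "\<one> \<otimes> c \<in> U #> c" using U(3) unfolding r_coset_def by blast
    ultimately show "c \<in> U" by simp
  qed
  ultimately show ?thesis
    using normal_core_normal[OF S] normal_core_subset by blast
qed

lemma (in group) profinite_open_normal_subgroup_avoiding:
  assumes pg: "profinite_group G T" and x: "x \<in> carrier G" "x \<noteq> \<one>"
  shows "\<exists>H. H \<lhd> G \<and> openin T H \<and> x \<notin> H"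
proof -
  have tg: "topological_group G T" and top: "topspace T = carrier G"
    using pg by (simp_all add: profinite_group_def topological_group_def)
  obtain U where U: "closedin T U" "openin T U" "\<one> \<in> U" "x \<notin> U"
    using clopen_separation[of T \<one> x] pg x top unfolding profinite_group_def by auto
  then show ?thesis
    using open_normal_subgroup_in_clopen[OF tg _ U(1-3)] pg unfolding profinite_group_def by blast
qed

lemma (in group) finite_normal_contains_minimal_closed_normal:
  assumes t1: "t1_space T" and top: "topspace T = carrier G"
    and L: "finite L" "L \<lhd> G" "L \<noteq> {\<one>}"
  shows "\<exists>N. minimal_closed_normal G T N \<and> N \<subseteq> L"
proof -
  define P where "P M \<longleftrightarrow> M \<lhd> G \<and> M \<subseteq> L \<and> M \<noteq> {\<one>}" for M
  obtain N where N: "P N" and least: "\<And>M. P M \<Longrightarrow> card N \<le> card M"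
    using ex_has_least_nat[of P L card] L by (auto simp: P_def)
  have "finite N" using N L(1) finite_subset unfolding P_def by blast
  moreover have "N \<subseteq> carrier G" using N unfolding P_def by (auto dest: normal_imp_subgroup subgroup.subset)
  ultimately have "closedin T N" using t1 top by (simp add: t1_space_closedin_finite)
  moreover have "M = N" if M: "M \<lhd> G" "M \<subseteq> N" "M \<noteq> {\<one>}" for M
  proof -
    have "card N \<le> card M" using least M N unfolding P_def by blast
    moreover have "card M \<le> card N" using card_mono[OF \<open>finite N\<close> M(2)] .
    ultimately show "M = N" using card_subset_eq[OF \<open>finite N\<close> M(2)] by simp
  qed
  ultimately show ?thesis using N unfolding P_def minimal_closed_normal_def by blast
qed

section \<open>Abelian closed normal subgroups of profinite C-groups\<close>

locale abelian_normal_subgroup_of_C_group = group G for G (structure) +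
  fixes T :: "'a topology" and A :: "'a set"
  assumes C_group: "profinite_C_group G T"
    and A_normal: "A \<lhd> G" and A_closed: "closedin T A"
    and A_comm: "\<forall>x\<in>A. \<forall>y\<in>A. x \<otimes> y = y \<otimes> x"
begin

lemma profinite: "profinite_group G T"
  using C_group by (simp add: profinite_C_group_def)

lemma topological: "topological_group G T"
  using profinite by (simp add: profinite_group_def)

lemma compact: "compact_space T"
  using profinite by (simp add: profinite_group_def)

lemma t1: "t1_space T"
  using profinite by (simp add: profinite_group_def Hausdorff_imp_t1_space)

lemma topspace_eq: "topspace T = carrier G"
  using topological by (simp add: topological_group_def)

lemma A_subgroup: "subgroup A G"
  using A_normal by (rule normal_imp_subgroup)

lemma A_carrier: "A \<subseteq> carrier G"
  using A_subgroup by (rule subgroup.subset)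

lemma closed_normal_complement:
  assumes B: "closed_subgroup G T B" "B \<subseteq> A"
  shows "\<exists>L. L \<lhd> G \<and> closedin T L \<and> L \<subseteq> A \<and> B <#> L = A \<and> B \<inter> L = {\<one>}"
proof -
  obtain K where K: "closedin T K" "subgroup K G" "B <#> K = carrier G" "B \<inter> K = {\<one>}"
    using C_group B(1)
    unfolding profinite_C_group_def closed_subgroup_def permutable_complement_def by blast
  have "B <#> (A \<inter> K) = A \<inter> (B <#> K)"
    using Int_set_mult_modular[OF A_subgroup B(2) subgroup.subset[OF K(2)]] by simp
  also have "\<dots> = A" using K(3) A_carrier by auto
  moreover have "A \<inter> K \<lhd> G"
    using abelian_normal_Int_complement_normal[OF A_normal A_comm B(2) K(2,3)] .
  moreover have "B \<inter> (A \<inter> K) = {\<one>}"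
    using K(4) subgroup.one_closed[OF A_subgroup] by blast
  ultimately show ?thesis
    using closedin_Int[OF A_closed K(1)] by blast
qed

lemma finite_if_minimal:
  assumes min: "minimal_closed_normal G T A"
  shows "finite A"
proof -
  obtain x where x: "x \<in> A" "x \<noteq> \<one>"
    using min subgroup.one_closed[OF A_subgroup] unfolding minimal_closed_normal_def by blast
  then obtain H where H: "H \<lhd> G" "openin T H" "x \<notin> H"
    using profinite_open_normal_subgroup_avoiding[OF profinite] A_carrier by blast
  have "closedin T (H \<inter> A)"
    using closedin_open_subgroup[OF topological normal_imp_subgroup[OF H(1)] H(2)] A_closed by blast
  moreover have "H \<inter> A \<noteq> A" using x H(3) by blast
  ultimately have "H \<inter> A = {\<one>}"
    using min normal_subgroup_intersect[OF H(1) A_normal] unfolding minimal_closed_normal_def by blast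
  then show ?thesis
    using finite_if_Int_open_trivial[OF topological compact A_subgroup A_closed H(2)] by blast
qed

lemma prime_card_if_minimal:
  assumes min: "minimal_closed_normal G T A"
  shows "prime (card A)"
proof -
  have fin: "finite A" using finite_if_minimal[OF min] .
  have "P = {\<one>} \<or> P = A" if P: "subgroup P (G\<lparr>carrier := A\<rparr>)" for P
  proof -
    have PA: "P \<subseteq> A" using subgroup.subset[OF P] by simp
    have P_sub: "subgroup P G" using incl_subgroup[OF A_subgroup P] .
    have "finite P" "P \<subseteq> topspace T" using fin PA A_carrier topspace_eq finite_subset by auto
    then have "closedin T P" using t1 unfolding t1_space_closedin_finite by blast
    then obtain L where L: "L \<lhd> G" "closedin T L" "L \<subseteq> A" "P <#> L = A" "P \<inter> L = {\<one>}"
      using closed_normal_complement PA P_sub unfolding closed_subgroup_def by blast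
    show ?thesis
    proof (cases "L = {\<one>}")
      case True
      then show ?thesis using L(4) set_mult_one_right PA A_carrier by auto
    next
      case False
      then have "L = A" using min L(1-3) unfolding minimal_closed_normal_def by blast
      then show ?thesis using L(5) PA subgroup.one_closed[OF P_sub] by blast
    qed
  qed
  then have "prime (order (G\<lparr>carrier := A\<rparr>))"
    using group.prime_order_if_no_proper_subgroups[OF subgroup_imp_group[OF A_subgroup]] fin min
    by (auto simp: minimal_closed_normal_def)
  then show ?thesis by (simp add: order_def)
qed

lemma complement_of_maximal_open_is_minimal:
  assumes B: "B \<lhd> G" "B \<subseteq> A" "B \<noteq> A" "openin (subtopology T A) B"
    and maximal: "\<And>C. C \<lhd> G \<Longrightarrow> C \<subseteq> A \<Longrightarrow> C \<noteq> A \<Longrightarrow> openin (subtopology T A) C \<Longrightarrow>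
      B \<subseteq> C \<Longrightarrow> C = B"
    and L: "L \<lhd> G" "closedin T L" "L \<subseteq> A" "B <#> L = A" "B \<inter> L = {\<one>}"
  shows "minimal_closed_normal G T L"
proof -
  have Bc: "B \<subseteq> carrier G" using B(2) A_carrier by blast
  have B_one: "\<one> \<in> B" using subgroup.one_closed[OF normal_imp_subgroup[OF B(1)]] .
  have "M = L" if M: "M \<lhd> G" "M \<subseteq> L" "M \<noteq> {\<one>}" for M
  proof -
    have M_sub: "subgroup M G" using M(1) by (rule normal_imp_subgroup)
    have Mc: "M \<subseteq> carrier G" using M_sub by (rule subgroup.subset)
    have BM_normal: "B <#> M \<lhd> G" using normal_set_mult[OF B(1) M(1)] .
    have "B <#> M \<subseteq> B <#> L" by (rule mono_set_mult) (use M(2) in auto)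
    then have "B <#> M \<subseteq> A" using L(4) by simp
    moreover have "B \<subseteq> B <#> M" using subset_set_mult_right[OF M_sub Bc] .
    moreover have "openin (subtopology T A) (B <#> M)"
      using openin_subgroupI[OF topological A_subgroup normal_imp_subgroup[OF BM_normal]]
        \<open>B <#> M \<subseteq> A\<close> B(4) B_one \<open>B \<subseteq> B <#> M\<close> by blast
    ultimately consider "B <#> M = A" | "B <#> M = B"
      using maximal[OF BM_normal] by blast
    then show "M = L"
    proof cases
      case 1
      then have "M <#> B = A" using commut_normal[OF M_sub B(1)] by simp
      then have "L = M <#> (L \<inter> B)"
        using Int_set_mult_modular[OF normal_imp_subgroup[OF L(1)] M(2) Bc] L(3) by auto
      also have "\<dots> = M" using L(5) set_mult_one_right[OF Mc] by (simp add: Int_commute)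
      finally show ?thesis by simp
    next
      case 2
      have "M \<subseteq> B \<inter> L"
        using subset_set_mult_left[OF normal_imp_subgroup[OF B(1)] Mc] 2 M(2) by simp
      then show ?thesis using L(5) M(3) subgroup.one_closed[OF M_sub] by blast
    qed
  qed
  moreover have "L \<noteq> {\<one>}" using B(3) L(4) set_mult_one_right[OF Bc] by auto
  ultimately show ?thesis using L(1,2) unfolding minimal_closed_normal_def by blast
qed

lemma quotient_by_maximal_open_iso_minimal:
  assumes B: "B \<lhd> G" "B \<subseteq> A" "B \<noteq> A" "openin (subtopology T A) B"
    and maximal: "\<And>C. C \<lhd> G \<Longrightarrow> C \<subseteq> A \<Longrightarrow> C \<noteq> A \<Longrightarrow> openin (subtopology T A) C \<Longrightarrow>
      B \<subseteq> C \<Longrightarrow> C = B"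
  shows "\<exists>N \<phi>. minimal_closed_normal G T N \<and> N \<subseteq> A \<and>
           \<phi> \<in> iso (G\<lparr>carrier := A\<rparr> Mod B) (G\<lparr>carrier := N\<rparr>) \<and>
           (\<forall>g\<in>carrier G. \<forall>a\<in>A. \<phi> (B #> (g \<otimes> a \<otimes> inv g)) = g \<otimes> \<phi> (B #> a) \<otimes> inv g)"
proof -
  interpret B: normal B G using B(1) .
  have "closedin T B"
    using closedin_subtopology_open_subgroup[OF topological A_subgroup B.is_subgroup B(2,4)]
      closedin_trans_full A_closed by blast
  then obtain L where L: "L \<lhd> G" "closedin T L" "L \<subseteq> A" "B <#> L = A" "B \<inter> L = {\<one>}"
    using closed_normal_complement B(2) B.is_subgroup unfolding closed_subgroup_def by blast
  have Lc: "L \<subseteq> carrier G" using L(3) A_carrier by blast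
  define \<psi> where "\<psi> l = B #> l" for l
  have \<psi>: "\<psi> \<in> iso (G\<lparr>carrier := L\<rparr>) (G\<lparr>carrier := A\<rparr> Mod B)"
    unfolding \<psi>_def using r_coset_iso_quotient[OF A_subgroup B(1) normal_imp_subgroup[OF L(1)] L(4,5)] .
  define \<phi> where "\<phi> = inv_into L \<psi>"
  have "\<phi> \<in> iso (G\<lparr>carrier := A\<rparr> Mod B) (G\<lparr>carrier := L\<rparr>)"
    unfolding \<phi>_def using group.iso_set_sym[OF subgroup_imp_group[OF normal_imp_subgroup[OF L(1)]] \<psi>]
    by simp
  moreover have "\<phi> (B #> (g \<otimes> a \<otimes> inv g)) = g \<otimes> \<phi> (B #> a) \<otimes> inv g" if g: "g \<in> carrier G" and a: "a \<in> A" for g a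
  proof -
    have bij: "bij_betw \<psi> L ((\<lambda>a. B #> a) ` A)"
      using \<psi> by (simp add: iso_def carrier_restricted_FactGroup)
    have a_image: "B #> a \<in> \<psi> ` L" using a bij unfolding bij_betw_def by blast
    have l: "\<phi> (B #> a) \<in> L" "B #> \<phi> (B #> a) = B #> a"
      unfolding \<phi>_def using inv_into_into[OF a_image] f_inv_into_f[OF a_image]
      by (simp_all add: \<psi>_def)
    have "B #> (g \<otimes> \<phi> (B #> a) \<otimes> inv g) = B #> (g \<otimes> a \<otimes> inv g)"
      using B.r_coset_conjugate[OF l(2)] g a l(1) Lc A_carrier by blast
    moreover have "g \<otimes> \<phi> (B #> a) \<otimes> inv g \<in> L" using L(1) g l(1) normal_inv_iff by blast
    ultimately show ?thesis
      using bij unfolding \<phi>_def \<psi>_def bij_betw_def by (metis inv_into_f_f)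
  qed
  ultimately show ?thesis
    using complement_of_maximal_open_is_minimal[OF B maximal L] L(3) by blast
qed

lemma exists_minimal_closed_normal:
  assumes "A \<noteq> {\<one>}"
  shows "\<exists>N. minimal_closed_normal G T N \<and> N \<subseteq> A"
proof -
  obtain x where x: "x \<in> A" "x \<noteq> \<one>"
    using assms subgroup.one_closed[OF A_subgroup] by blast
  then obtain H where H: "H \<lhd> G" "openin T H" "x \<notin> H"
    using profinite_open_normal_subgroup_avoiding[OF profinite] A_carrier by blast
  have "closed_subgroup G T (H \<inter> A)"
    using closedin_open_subgroup[OF topological normal_imp_subgroup[OF H(1)] H(2)] A_closed
      normal_imp_subgroup[OF normal_subgroup_intersect[OF H(1) A_normal]]
    unfolding closed_subgroup_def by blast
  then obtain L where L: "L \<lhd> G" "closedin T L" "L \<subseteq> A" "(H \<inter> A) <#> L = A" "H \<inter> A \<inter> L = {\<one>}"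
    using closed_normal_complement by blast
  have "L \<inter> H = {\<one>}"
    using L(3,5) subgroup.one_closed[OF normal_imp_subgroup[OF L(1)]] by blast
  then have "finite L"
    by (rule finite_if_Int_open_trivial[OF topological compact normal_imp_subgroup[OF L(1)] L(2) H(2)])
  moreover have "L \<noteq> {\<one>}"
    using L(4) set_mult_one_right[of "H \<inter> A"] A_carrier x H(3) by auto
  ultimately show ?thesis
    using finite_normal_contains_minimal_closed_normal[OF t1 topspace_eq _ L(1)] L(3) by blast
qed

end

theorem lemma2p7:
  fixes G :: "('a, 'b) monoid_scheme" and T :: "'a topology" and A :: "'a set"
  assumes "profinite_C_group G T"
    and "A \<lhd> G" and "closedin T A"
    and "\<forall>x\<in>A. \<forall>y\<in>A. x \<otimes>\<^bsub>G\<^esub> y = y \<otimes>\<^bsub>G\<^esub> x"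
  shows "(\<forall>B. closed_subgroup G T B \<and> B \<subseteq> A \<longrightarrow>
            (\<exists>L. L \<lhd> G \<and> closedin T L \<and> L \<subseteq> A \<and>
                 B <#>\<^bsub>G\<^esub> L = A \<and> B \<inter> L = {\<one>\<^bsub>G\<^esub>}))
     \<and> (minimal_closed_normal G T A \<longrightarrow> prime (card A))
     \<and> (\<forall>B. A \<noteq> {\<one>\<^bsub>G\<^esub>} \<and>
            (B \<lhd> G \<and> B \<subseteq> A \<and> B \<noteq> A \<and> openin (subtopology T A) B) \<and>
            (\<forall>C. C \<lhd> G \<and> C \<subseteq> A \<and> C \<noteq> A \<and> openin (subtopology T A) C \<and> B \<subseteq> C
                 \<longrightarrow> C = B)
          \<longrightarrow> (\<exists>N \<phi>. minimal_closed_normal G T N \<and> N \<subseteq> A \<and>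
                 \<phi> \<in> iso ((G\<lparr>carrier := A\<rparr>) Mod B) (G\<lparr>carrier := N\<rparr>) \<and>
                 (\<forall>g\<in>carrier G. \<forall>a\<in>A.
                    \<phi> (B #>\<^bsub>G\<^esub> (g \<otimes>\<^bsub>G\<^esub> a \<otimes>\<^bsub>G\<^esub> inv\<^bsub>G\<^esub> g))
                    = g \<otimes>\<^bsub>G\<^esub> \<phi> (B #>\<^bsub>G\<^esub> a) \<otimes>\<^bsub>G\<^esub> inv\<^bsub>G\<^esub> g)))
     \<and> (A \<noteq> {\<one>\<^bsub>G\<^esub>} \<longrightarrow> (\<exists>N. minimal_closed_normal G T N \<and> N \<subseteq> A))"
proof -
  have "group G"
    using assms(1) by (simp add: profinite_C_group_def profinite_group_def topological_group_def)
  then interpret abelian_normal_subgroup_of_C_group G T A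
    using assms by (simp add: abelian_normal_subgroup_of_C_group_def
      abelian_normal_subgroup_of_C_group_axioms_def)
  show ?thesis
    apply (intro conjI allI impI)
    subgoal by (rule closed_normal_complement) auto
    subgoal by (rule prime_card_if_minimal)
    subgoal by (rule quotient_by_maximal_open_iso_minimal) auto
    subgoal by (rule exists_minimal_closed_normal)
    done
qed

end
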